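(* If $\mathcal G$ is an $n$-dimensional $\mathrm{MD}_{n-2}(n)$-algebra with $\dim\mathcal G^1=2$ and $\mathcal G^1$ contained in the centre of $\mathcal G$, then $n-2$ is divisible by $4$.
   Context: $\mathcal G^1=[\mathcal G,\mathcal G]$. An $\mathrm{MD}_k(n)$-algebra is an $n$-dimensional real solvable Lie algebra all of whose non-trivial coadjoint orbits (for its connected simply connected Lie group; $\dim\Omega_F=\operatorname{rank}(F([x_i,x_j]))$ for a basis $\{x_i\}$, non-trivial iff $F|_{\mathcal G^1}\ne0$) have dimension $k$. *)

theory Defs
  imports "HOL-Analysis.Analysis"
begin

text \<open>An n-dimensional real Lie algebra is modelled as R^n (n = CARD('n)) with a
bracket operation; the standard basis is given by axis i 1.\<close>

definition lie_algebra :: "(real^'n \<Rightarrow> real^'n \<Rightarrow> real^'n) \<Rightarrow> bool" where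
  "lie_algebra br \<longleftrightarrow>
     (\<forall>x. linear (br x)) \<and> (\<forall>y. linear (\<lambda>x. br x y)) \<and>
     (\<forall>x. br x x = 0) \<and>
     (\<forall>x y z. br x (br y z) + br y (br z x) + br z (br x y) = 0)"

definition bracket_span :: "(real^'n \<Rightarrow> real^'n \<Rightarrow> real^'n) \<Rightarrow> (real^'n) set \<Rightarrow> (real^'n) set \<Rightarrow> (real^'n) set" where
  "bracket_span br S T = span {br x y | x y. x \<in> S \<and> y \<in> T}"

fun derived_series :: "(real^'n \<Rightarrow> real^'n \<Rightarrow> real^'n) \<Rightarrow> nat \<Rightarrow> (real^'n) set" where
  "derived_series br 0 = UNIV"
| "derived_series br (Suc k) = bracket_span br (derived_series br k) (derived_series br k)"

definition derived_algebra :: "(real^'n \<Rightarrow> real^'n \<Rightarrow> real^'n) \<Rightarrow> (real^'n) set" where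
  "derived_algebra br = bracket_span br UNIV UNIV"

definition solvable_lie :: "(real^'n \<Rightarrow> real^'n \<Rightarrow> real^'n) \<Rightarrow> bool" where
  "solvable_lie br \<longleftrightarrow> lie_algebra br \<and> (\<exists>k. derived_series br k = {0})"

definition lie_centre :: "(real^'n \<Rightarrow> real^'n \<Rightarrow> real^'n) \<Rightarrow> (real^'n) set" where
  "lie_centre br = {x. \<forall>y. br x y = 0}"

text \<open>Dimension of the coadjoint orbit of the functional F:
  rank of the matrix (F([x_i,x_j])) for the standard basis.\<close>
definition coadj_orbit_dim :: "(real^'n \<Rightarrow> real^'n \<Rightarrow> real^'n) \<Rightarrow> (real^'n \<Rightarrow> real) \<Rightarrow> nat" where
  "coadj_orbit_dim br F = rank (\<chi> i j. F (br (axis i 1) (axis j 1)) :: real^'n^'n)"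

text \<open>MD_k(n)-algebra (n = CARD('n)): real solvable Lie algebra all of whose
  non-trivial coadjoint orbits (F restricted to G^1 nonzero) have dimension k.\<close>
definition MD_algebra :: "nat \<Rightarrow> (real^'n \<Rightarrow> real^'n \<Rightarrow> real^'n) \<Rightarrow> bool" where
  "MD_algebra k br \<longleftrightarrow> solvable_lie br \<and>
     (\<forall>F. linear F \<and> (\<exists>x\<in>derived_algebra br. F x \<noteq> 0) \<longrightarrow> coadj_orbit_dim br F = k)"

end

theory Submission
  imports Defs "HOL-Computational_Algebra.Fundamental_Theorem_Algebra"
begin

text \<open>
  Let \<open>z\<^sub>1, z\<^sub>2\<close> be a basis of the central derived algebra \<open>\<G>\<^sup>1\<close> and \<open>B\<^sub>i(x, y) = z\<^sub>i \<bullet> [x, y]\<close>.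
  Each nonzero combination \<open>a B\<^sub>1 + b B\<^sub>2\<close> is the Kirillov form of a functional not vanishing on
  \<open>\<G>\<^sup>1\<close>, so by the MD condition its radical is \<open>2\<close>-dimensional, and since \<open>\<G>\<^sup>1\<close> is central it
  is \<open>\<G>\<^sup>1\<close> itself. Hence on the orthogonal complement \<open>W\<close> of \<open>\<G>\<^sup>1\<close>, of dimension \<open>n - 2\<close>, all
  nonzero members of the pencil \<open>a B\<^sub>1 + b B\<^sub>2\<close> are nondegenerate alternating forms.
  The operator \<open>T = B\<^sub>1\<^sup>-\<^sup>1 B\<^sub>2\<close> on \<open>W\<close> then has no real eigenvalue, so it leaves some plane
  \<open>span {x, T x}\<close> invariant. This plane is isotropic, and removing it together with a dual plane
  leaves a subspace of codimension \<open>4\<close> on which the pencil is still nondegenerate; by induction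
  \<open>4\<close> divides \<open>dim W = n - 2\<close>.
\<close>

section \<open>Linear algebra\<close>

lemma dim_kernel_plus_dim_image:
  fixes f :: "'a::euclidean_space \<Rightarrow> 'b::euclidean_space"
  assumes lf: "linear f" and W: "subspace W"
  shows "dim (W \<inter> {x. f x = 0}) + dim (f ` W) = dim W"
proof -
  define K where "K = W \<inter> {x. f x = 0}"
  have sK: "subspace K"
    unfolding K_def using W lf by (simp add: subspace_inter linear_subspace_kernel)
  define D where "D = {y \<in> W. \<forall>x\<in>K. orthogonal x y}"
  have dD: "dim D + dim K = dim W" unfolding D_def
    by (rule dim_subspace_orthogonal_to_vectors[OF sK W]) (auto simp: K_def)
  have sD: "subspace D" unfolding D_def
    using W by (auto simp: subspace_def orthogonal_clauses)
  have "f ` W \<subseteq> f ` D"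
  proof
    fix v assume "v \<in> f ` W"
    then obtain w where w: "w \<in> W" "v = f w" by auto
    obtain y z where yz: "y \<in> span K" "\<And>u. u \<in> span K \<Longrightarrow> orthogonal z u" "w = y + z"
      using orthogonal_subspace_decomp_exists[of K w] by metis
    have yK: "y \<in> K" using yz(1) span_eq_iff[THEN iffD2, OF sK] by simp
    have "z \<in> W"
      using w yK W yz(3) subspace_diff[OF W, of w y] by (simp add: K_def)
    moreover have "orthogonal x z" if "x \<in> K" for x
      using yz(2)[OF span_base[OF that]] by (simp add: orthogonal_commute)
    ultimately have "z \<in> D" by (simp add: D_def)
    moreover have "f w = f z" using yz(3) yK lf by (simp add: K_def linear_add)
    ultimately show "v \<in> f ` D" using w by auto
  qed
  then have img: "f ` W = f ` D" by (auto simp: D_def)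
  have "inj_on f D"
  proof (rule inj_onI)
    fix a b assume ab: "a \<in> D" "b \<in> D" "f a = f b"
    have "a - b \<in> D" using ab sD by (simp add: subspace_diff)
    moreover have "a - b \<in> K" using ab lf unfolding K_def D_def
      by (auto simp: linear_diff W subspace_diff)
    ultimately have "orthogonal (a - b) (a - b)" by (auto simp: D_def)
    then show "a = b" by (simp add: orthogonal_def)
  qed
  then have "dim (f ` D) = dim D"
    using dim_image_eq[OF lf, of D] span_eq_iff[THEN iffD2, OF sD] by simp
  then show ?thesis using dD img K_def by simp
qed

definition nondegenerate_on :: "('a::real_vector \<Rightarrow> 'a \<Rightarrow> real) \<Rightarrow> 'a set \<Rightarrow> bool" where
  "nondegenerate_on B W \<longleftrightarrow> (\<forall>x\<in>W. (\<forall>y\<in>W. B x y = 0) \<longrightarrow> x = 0)"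

definition alternating :: "('a \<Rightarrow> 'a \<Rightarrow> 'b::real_vector) \<Rightarrow> bool" where
  "alternating B \<longleftrightarrow> (\<forall>x. B x x = 0)"

lemma alternating_antisym:
  assumes "bilinear B" and "alternating B"
  shows "B x y = - B y x"
proof -
  have "B (x + y) (x + y) = 0" using assms(2) by (simp add: alternating_def)
  then have "B x x + B x y + (B y x + B y y) = 0"
    using assms(1) by (simp add: bilinear_ladd bilinear_radd)
  then show ?thesis using assms(2) by (simp add: alternating_def eq_neg_iff_add_eq_0)
qed

lemma linear_functional_eq_inner:
  fixes \<phi> :: "'a::euclidean_space \<Rightarrow> real"
  assumes "linear \<phi>"
  shows "\<phi> w = (\<Sum>i\<in>Basis. \<phi> i *\<^sub>R i) \<bullet> w"
proof -
  have "\<phi> w = \<phi> (\<Sum>i\<in>Basis. (w \<bullet> i) *\<^sub>R i)" by (simp add: euclidean_representation)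
  also have "\<dots> = (\<Sum>i\<in>Basis. \<phi> i * (i \<bullet> w))"
    using assms by (simp add: linear_sum linear_scale inner_commute mult.commute)
  also have "\<dots> = (\<Sum>i\<in>Basis. \<phi> i *\<^sub>R i) \<bullet> w"
    by (simp add: inner_sum_left)
  finally show ?thesis .
qed

lemma sums_orthogonal_complement_eq_UNIV:
  fixes U W :: "'a::euclidean_space set"
  assumes U: "subspace U" and W: "subspace W" and dim: "dim U = dim W"
    and trivial: "U \<inter> {y. \<forall>x\<in>W. orthogonal x y} \<subseteq> {0}"
  shows "{u + v |u v. u \<in> U \<and> v \<in> {y. \<forall>x\<in>W. orthogonal x y}} = UNIV"
proof -
  define Wp where "Wp = {y. \<forall>x\<in>W. orthogonal x y}"
  define S where "S = {u + v |u v. u \<in> U \<and> v \<in> Wp}"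
  have sWp: "subspace Wp" unfolding Wp_def
    by (auto simp: subspace_def orthogonal_clauses)
  have "dim Wp + dim W = DIM('a)"
    using dim_subspace_orthogonal_to_vectors[OF W subspace_UNIV] by (simp add: Wp_def)
  moreover have "dim (U \<inter> Wp) = 0" using trivial by (simp add: Wp_def)
  moreover have "dim S + dim (U \<inter> Wp) = dim U + dim Wp"
    unfolding S_def by (rule dim_sums_Int[OF U sWp])
  ultimately have "dim S = DIM('a)" using dim by linarith
  then have "span S = UNIV" by (simp add: dim_eq_full)
  moreover have "span S = S" using subspace_sums[OF U sWp] by (simp add: S_def)
  ultimately show ?thesis by (simp add: S_def Wp_def)
qed

text \<open>The gradient map \<open>G\<close> of \<open>B\<close> embeds \<open>W\<close> into the space, meeting the orthogonal complement of
  \<open>W\<close> only in \<open>0\<close>; so the gradient of \<open>\<phi>\<close> is \<open>G t\<close> up to a vector orthogonal to \<open>W\<close>.\<close>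
lemma nondegenerate_on_represents:
  fixes B :: "'a::euclidean_space \<Rightarrow> 'a \<Rightarrow> real"
  assumes B: "bilinear B" and nd: "nondegenerate_on B W" and W: "subspace W"
    and \<phi>: "linear \<phi>"
  shows "\<exists>t\<in>W. \<forall>u\<in>W. B t u = \<phi> u"
proof -
  define G where "G t = (\<Sum>i\<in>Basis. B t i *\<^sub>R i)" for t
  have BG: "B t u = G t \<bullet> u" for t u
    unfolding G_def using linear_functional_eq_inner[of "B t" u] B by (simp add: bilinear_def)
  have lG: "linear G"
    unfolding G_def using B
    by (intro linearI) (simp_all add: bilinear_ladd bilinear_lmul scaleR_add_left sum.distrib
        scaleR_sum_right)
  have G0: "t = 0" if "t \<in> W" "\<forall>u\<in>W. G t \<bullet> u = 0" for t
    using nd that by (simp add: nondegenerate_on_def BG)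
  have "inj_on G W"
  proof (rule inj_onI)
    fix a b assume ab: "a \<in> W" "b \<in> W" "G a = G b"
    then have "a - b = 0"
      using G0[of "a - b"] W lG by (simp add: subspace_diff linear_diff)
    then show "a = b" by simp
  qed
  then have "dim (G ` W) = dim W"
    using dim_image_eq[OF lG, of W] span_eq_iff[THEN iffD2, OF W] by simp
  moreover have "G ` W \<inter> {y. \<forall>x\<in>W. orthogonal x y} \<subseteq> {0}"
  proof
    fix v assume "v \<in> G ` W \<inter> {y. \<forall>x\<in>W. orthogonal x y}"
    then obtain t where t: "t \<in> W" "v = G t" "\<forall>u\<in>W. G t \<bullet> u = 0"
      by (auto simp: orthogonal_def inner_commute)
    then have "t = 0" by (intro G0)
    then show "v \<in> {0}" using t(2) lG by (simp add: linear_0)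
  qed
  ultimately have "{u + v |u v. u \<in> G ` W \<and> v \<in> {y. \<forall>x\<in>W. orthogonal x y}} = UNIV"
    using sums_orthogonal_complement_eq_UNIV[of "G ` W" W] W lG
    by (simp add: linear_subspace_image)
  then obtain t v where t: "t \<in> W" "\<forall>x\<in>W. orthogonal x v"
    "(\<Sum>i\<in>Basis. \<phi> i *\<^sub>R i) = G t + v"
    by blast
  have "B t u = \<phi> u" if "u \<in> W" for u
    using linear_functional_eq_inner[OF \<phi>, of u] t(2,3) that
    by (simp add: BG orthogonal_def inner_add_right inner_commute)
  then show ?thesis using t(1) by blast
qed

text \<open>\<open>T\<close> is \<open>B\<^sub>1\<^sup>-\<^sup>1 B\<^sub>2\<close> on \<open>W\<close>; it is defined on a basis of \<open>W\<close> and extended linearly.\<close>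
lemma exists_operator_intertwining:
  fixes B\<^sub>1 B\<^sub>2 :: "'a::euclidean_space \<Rightarrow> 'a \<Rightarrow> real"
  assumes W: "subspace W" and B\<^sub>1: "bilinear B\<^sub>1" and B\<^sub>2: "bilinear B\<^sub>2"
    and nd: "nondegenerate_on B\<^sub>1 W"
  shows "\<exists>T. linear T \<and> (\<forall>v\<in>W. T v \<in> W \<and> (\<forall>u\<in>W. B\<^sub>1 (T v) u = B\<^sub>2 v u))"
proof -
  define P where "P T v \<longleftrightarrow> T v \<in> W \<and> (\<forall>u\<in>W. B\<^sub>1 (T v) u = B\<^sub>2 v u)" for T v
  have "\<exists>t. t \<in> W \<and> (\<forall>u\<in>W. B\<^sub>1 t u = B\<^sub>2 v u)" for v
    using nondegenerate_on_represents[OF B\<^sub>1 nd W, of "B\<^sub>2 v"] B\<^sub>2 by (auto simp: bilinear_def)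
  then obtain f where f: "\<And>v. P f v" unfolding P_def by metis
  obtain Bs where Bs: "Bs \<subseteq> W" "independent Bs" "W \<subseteq> span Bs"
    by (rule basis_exists[of W])
  obtain T where T: "linear T" "\<forall>x\<in>Bs. T x = f x"
    using linear_independent_extend[OF Bs(2), of f] by blast
  have "subspace (Collect (P T))"
    unfolding subspace_def mem_Collect_eq P_def
    using T(1) W B\<^sub>1 B\<^sub>2
    by (simp add: linear_0 linear_add linear_scale subspace_0 subspace_add subspace_scale
        bilinear_lzero bilinear_ladd bilinear_lmul)
  moreover have "P T x" if "x \<in> Bs" for x
    using T(2) f[of x] that by (simp add: P_def)
  ultimately have "P T v" if "v \<in> W" for v
    using span_induct[of v Bs "P T"] that Bs(3) by auto
  then show ?thesis using T(1) by (auto simp: P_def)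
qed

section \<open>Polynomials in a linear operator\<close>

text \<open>\<open>poly_op T p v\<close> is \<open>p(T) v\<close>, evaluated by Horner's scheme.\<close>
definition poly_op :: "('a::real_vector \<Rightarrow> 'a) \<Rightarrow> real poly \<Rightarrow> 'a \<Rightarrow> 'a" where
  "poly_op T p v = foldr (\<lambda>c w. c *\<^sub>R v + T w) (coeffs p) 0"

lemma poly_op_0 [simp]: "poly_op T 0 v = 0"
  by (simp add: poly_op_def)

lemma poly_op_pCons:
  assumes "linear T"
  shows "poly_op T (pCons a p) v = a *\<^sub>R v + T (poly_op T p v)"
proof (cases "p = 0 \<and> a = 0")
  case True
  then show ?thesis using assms by (simp add: linear_0)
next
  case False
  then have "coeffs (pCons a p) = a # coeffs p" by (auto simp: cCons_def)
  then show ?thesis by (simp add: poly_op_def)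
qed

lemma poly_op_add:
  assumes "linear T"
  shows "poly_op T (p + q) v = poly_op T p v + poly_op T q v"
  by (induction p q rule: poly_induct2)
    (simp_all add: assms poly_op_pCons linear_add scaleR_add_left algebra_simps)

lemma poly_op_smult:
  assumes "linear T"
  shows "poly_op T (smult c p) v = c *\<^sub>R poly_op T p v"
  by (induction p) (simp_all add: assms poly_op_pCons linear_scale scaleR_add_right)

lemma poly_op_mult:
  assumes "linear T"
  shows "poly_op T (p * q) v = poly_op T p (poly_op T q v)"
  by (induction p) (simp_all add: assms poly_op_pCons poly_op_add poly_op_smult)

lemma poly_op_monom:
  assumes "linear T"
  shows "poly_op T (monom c i) v = c *\<^sub>R (T ^^ i) v"
  by (induction i) (simp_all add: assms monom_0 monom_Suc poly_op_pCons linear_0 linear_scale)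

lemma poly_op_sum:
  assumes "linear T" and "finite A"
  shows "poly_op T (\<Sum>i\<in>A. f i) v = (\<Sum>i\<in>A. poly_op T (f i) v)"
  using assms(2) by induction (simp_all add: poly_op_add[OF assms(1)])

lemma poly_op_in_subspace:
  assumes "linear T" and "subspace W" and "\<And>x. x \<in> W \<Longrightarrow> T x \<in> W" and "v \<in> W"
  shows "poly_op T p v \<in> W"
  by (induction p) (simp_all add: assms poly_op_pCons subspace_0 subspace_add subspace_scale)

lemma poly_op_linear_factor:
  "linear T \<Longrightarrow> poly_op T [:c, 1:] v = T v + c *\<^sub>R v"
  by (simp add: poly_op_pCons linear_0)

lemma poly_op_quadratic_factor:
  "linear T \<Longrightarrow> poly_op T [:c, b, 1:] v = T (T v) + b *\<^sub>R T v + c *\<^sub>R v"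
  by (simp add: poly_op_pCons linear_0 linear_add linear_scale algebra_simps)

lemma poly_map_of_real_pCons:
  "poly (map_poly of_real (pCons a p)) z = of_real a + z * poly (map_poly of_real p) (z::'a::{comm_ring_1, real_algebra_1})"
  by (simp add: map_poly_pCons)

lemma poly_map_of_real_add:
  "poly (map_poly of_real (p + q)) z = poly (map_poly of_real p) z + poly (map_poly of_real q) (z::'a::{comm_ring_1, real_algebra_1})"
  by (induction p q rule: poly_induct2) (simp_all add: poly_map_of_real_pCons algebra_simps)

lemma poly_map_of_real_mult:
  "poly (map_poly of_real (p * q)) z = poly (map_poly of_real p) z * poly (map_poly of_real q) (z::'a::{comm_ring_1, real_algebra_1})"
proof (induction p)
  case (pCons a p)
  have "poly (map_poly of_real (smult a q)) z = of_real a * poly (map_poly of_real q) z"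
    by (induction q) (simp_all add: poly_map_of_real_pCons algebra_simps)
  with pCons show ?case
    by (simp add: poly_map_of_real_pCons poly_map_of_real_add algebra_simps)
qed simp

lemma poly_map_of_real_of_real:
  "poly (map_poly of_real p) (of_real x :: 'a::{comm_ring_1, real_algebra_1}) = of_real (poly p x)"
  by (induction p) (simp_all add: poly_map_of_real_pCons)

text \<open>A complex root \<open>z\<close> of \<open>f\<close> gives either a real linear factor or, when \<open>z\<close> is not real, the
  real quadratic factor \<open>(X - z)(X - cnj z)\<close>: the remainder of \<open>f\<close> modulo it is a real polynomial
  of degree at most 1 vanishing at the non-real point \<open>z\<close>.\<close>
lemma real_poly_linear_or_quadratic_factor:
  fixes f :: "real poly"
  assumes "degree f > 0"
  shows "\<exists>g q. f = g * q \<and> ((\<exists>c. g = [:c, 1:]) \<or> (\<exists>b c. g = [:c, b, 1:]))"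
proof -
  let ?E = "\<lambda>p. poly (map_poly complex_of_real p)"
  have "degree (map_poly complex_of_real f) = degree f" by (simp add: degree_map_poly)
  then have "\<not> constant (?E f)" using assms by (simp add: constant_degree)
  then obtain z where z: "?E f z = 0" using fundamental_theorem_of_algebra by blast
  show ?thesis
  proof (cases "Im z = 0")
    case True
    then have "z = of_real (Re z)" by (simp add: complex_eq_iff)
    then have "poly f (Re z) = 0"
      using z poly_map_of_real_of_real[of f "Re z"] by (metis of_real_eq_0_iff)
    then obtain q where "f = [:- Re z, 1:] * q" by (metis poly_eq_0_iff_dvd dvdE)
    then show ?thesis by blast
  next
    case False
    define g where "g = [:(Re z)\<^sup>2 + (Im z)\<^sup>2, -2 * Re z, 1:]"
    have Eg: "?E g z = 0" unfolding g_def
      by (simp add: map_poly_pCons complex_eq_iff power2_eq_square algebra_simps)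
    define r where "r = f mod g"
    have "?E f z = ?E (f div g * g + r) z" by (simp add: r_def)
    also have "\<dots> = ?E (f div g) z * ?E g z + ?E r z"
      by (simp only: poly_map_of_real_add poly_map_of_real_mult)
    finally have "?E r z = 0" using Eg z by simp
    moreover have "degree r \<le> 1"
      using degree_mod_less[of g f] by (fastforce simp: r_def g_def)
    then have r: "r = [:coeff r 0, coeff r 1:]"
      by (intro poly_eqI) (auto simp: coeff_pCons coeff_eq_0 split: nat.splits)
    have "?E r z = of_real (coeff r 0) + z * of_real (coeff r 1)"
      by (subst r) (simp add: map_poly_pCons)
    ultimately have "of_real (coeff r 0) + z * of_real (coeff r 1) = 0" by simp
    then have "r = 0" using False r by (auto simp: complex_eq_iff)
    then obtain q where "f = g * q" unfolding r_def by (metis mod_eq_0_iff_dvd dvdE)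
    then show ?thesis unfolding g_def by blast
  qed
qed

lemma finite_family_dependent:
  fixes u :: "nat \<Rightarrow> 'a::euclidean_space"
  assumes "\<And>i. i \<le> d \<Longrightarrow> u i \<in> W" and "dim W \<le> d"
  shows "\<exists>c. (\<exists>i\<le>d. c i \<noteq> 0) \<and> (\<Sum>i\<le>d. c i *\<^sub>R u i) = 0"
proof (cases "inj_on u {..d}")
  case False
  then obtain i j where ij: "i \<le> d" "j \<le> d" "i \<noteq> j" "u i = u j"
    unfolding inj_on_def by auto
  define c where "c k = (if k = i then 1 else 0) - (if k = j then 1 else 0 :: real)" for k
  have "(\<Sum>k\<le>d. c k *\<^sub>R u k) = u i - u j"
    using ij by (simp add: c_def scaleR_left_diff_distrib sum_subtractf if_distrib[of "\<lambda>a. a *\<^sub>R _"]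
        sum.delta cong: if_cong)
  then show ?thesis using ij by (intro exI[of _ c]) (auto simp: c_def)
next
  case True
  define S where "S = u ` {..d}"
  have "card S = Suc d" using True by (simp add: S_def card_image)
  moreover have "S \<subseteq> W" using assms(1) by (auto simp: S_def)
  ultimately have "dependent S"
    using independent_card_le_dim[of S W] assms(2) by linarith
  then obtain c where c: "\<exists>s\<in>S. c s \<noteq> 0" "(\<Sum>s\<in>S. c s *\<^sub>R s) = 0"
    by (auto simp: S_def dependent_finite)
  have "(\<Sum>i\<le>d. c (u i) *\<^sub>R u i) = 0"
    using c(2) sum.reindex[OF True, of "\<lambda>s. c s *\<^sub>R s"] by (simp add: S_def)
  then show ?thesis using c(1) by (intro exI[of _ "c \<circ> u"]) (auto simp: S_def)
qed

lemma poly_op_annihilator_exists: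
  fixes T :: "'a::euclidean_space \<Rightarrow> 'a"
  assumes T: "linear T" and inv: "\<And>x. x \<in> W \<Longrightarrow> T x \<in> W" and v: "v \<in> W"
  shows "\<exists>f. f \<noteq> 0 \<and> poly_op T f v = 0"
proof -
  have "(T ^^ i) v \<in> W" for i by (induction i) (simp_all add: v inv)
  then obtain c where c: "\<exists>i\<le>dim W. c i \<noteq> 0" "(\<Sum>i\<le>dim W. c i *\<^sub>R (T ^^ i) v) = 0"
    using finite_family_dependent[of "dim W" "\<lambda>i. (T ^^ i) v" W] by blast
  define f where "f = (\<Sum>i\<le>dim W. monom (c i) i)"
  have "poly_op T f v = 0" using c(2) T by (simp add: f_def poly_op_sum poly_op_monom)
  moreover have "coeff f i = c i" if "i \<le> dim W" for i
    using that by (simp add: f_def coeff_sum coeff_monom)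
  then have "f \<noteq> 0" using c(1) by auto
  ultimately show ?thesis by blast
qed

text \<open>Split off a real linear or quadratic factor \<open>g\<close> of \<open>f = g q\<close>: either \<open>q(T) u = 0\<close> and we
  recurse, or \<open>y = q(T) u \<noteq> 0\<close> is killed by \<open>g(T)\<close>, where a linear \<open>g\<close> would make \<open>y\<close> an eigenvector.\<close>
lemma invariant_plane_of_annihilator:
  fixes T :: "'a::euclidean_space \<Rightarrow> 'a"
  assumes T: "linear T" and W: "subspace W" and inv: "\<And>x. x \<in> W \<Longrightarrow> T x \<in> W"
    and no_eigen: "\<And>v c. v \<in> W \<Longrightarrow> T v = c *\<^sub>R v \<Longrightarrow> v = 0"
    and "f \<noteq> 0" and "u \<in> W" and "u \<noteq> 0" and "poly_op T f u = 0"
  shows "\<exists>x\<in>W. x \<noteq> 0 \<and> (\<exists>p q. T (T x) = p *\<^sub>R T x + q *\<^sub>R x)"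
  using assms(5-8)
proof (induction "degree f" arbitrary: f u rule: less_induct)
  case less
  show ?case
  proof (cases "degree f = 0")
    case True
    then obtain c where "f = [:c:]" by (metis degree_eq_zeroE)
    then show ?thesis using less.prems T by (simp add: poly_op_pCons linear_0)
  next
    case False
    then obtain g q where gq: "f = g * q"
      and g: "(\<exists>c. g = [:c, 1:]) \<or> (\<exists>b c. g = [:c, b, 1:])"
      using real_poly_linear_or_quadratic_factor[of f] by blast
    have "q \<noteq> 0" using gq less.prems by auto
    moreover have "g \<noteq> 0" "degree g \<ge> 1" using g by auto
    then have "degree q < degree f"
      using gq \<open>q \<noteq> 0\<close> degree_mult_eq[of g q] by simp
    define y where "y = poly_op T q u"
    show ?thesis
    proof (cases "y = 0")
      case True
      then show ?thesis
        using less.hyps[OF \<open>degree q < degree f\<close> \<open>q \<noteq> 0\<close> less.prems(2,3)] by (simp add: y_def)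
    next
      case False
      have yW: "y \<in> W" unfolding y_def by (rule poly_op_in_subspace[OF T W inv less.prems(2)])
      have gy: "poly_op T g y = 0" using less.prems(4) gq T by (simp add: poly_op_mult y_def)
      from g show ?thesis
      proof
        assume "\<exists>c. g = [:c, 1:]"
        then obtain c where "g = [:c, 1:]" by blast
        then have "T y = (- c) *\<^sub>R y" using gy T by (simp add: poly_op_linear_factor eq_neg_iff_add_eq_0)
        then show ?thesis using no_eigen yW False by blast
      next
        assume "\<exists>b c. g = [:c, b, 1:]"
        then obtain b c where "g = [:c, b, 1:]" by blast
        then have "T (T y) + (b *\<^sub>R T y + c *\<^sub>R y) = 0"
          using gy T by (simp add: poly_op_quadratic_factor add.assoc)
        then have "T (T y) = (- b) *\<^sub>R T y + (- c) *\<^sub>R y"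
          by (metis eq_neg_iff_add_eq_0 minus_add_distrib scaleR_minus_left)
        then show ?thesis using yW False by blast
      qed
    qed
  qed
qed

lemma exists_invariant_plane:
  fixes T :: "'a::euclidean_space \<Rightarrow> 'a"
  assumes T: "linear T" and W: "subspace W" and inv: "\<And>x. x \<in> W \<Longrightarrow> T x \<in> W"
    and no_eigen: "\<And>v c. v \<in> W \<Longrightarrow> T v = c *\<^sub>R v \<Longrightarrow> v = 0"
    and "W \<noteq> {0}"
  shows "\<exists>x\<in>W. x \<noteq> 0 \<and> (\<exists>p q. T (T x) = p *\<^sub>R T x + q *\<^sub>R x)"
proof -
  obtain v where v: "v \<in> W" "v \<noteq> 0" using \<open>W \<noteq> {0}\<close> subspace_0[OF W] by auto
  obtain f where f: "f \<noteq> 0" "poly_op T f v = 0"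
    using poly_op_annihilator_exists[OF T inv v(1)] by blast
  show ?thesis
    by (rule invariant_plane_of_annihilator[of T W f v]) (use T W inv no_eigen f v in auto)
qed

section \<open>Regular pencils of alternating forms\<close>

lemma nondegenerate_on_dual_vector:
  fixes B :: "'a::euclidean_space \<Rightarrow> 'a \<Rightarrow> real"
  assumes B: "bilinear B" and nd: "nondegenerate_on B W" and W: "subspace W"
    and xy: "x \<in> W" "y \<in> W" and indep: "\<And>g d. g *\<^sub>R x + d *\<^sub>R y = 0 \<Longrightarrow> g = 0 \<and> d = 0"
  shows "\<exists>e\<in>W. B x e = 1 \<and> B y e = 0"
proof -
  define h where "h w = (B x w, B y w)" for w
  have lh: "linear h" unfolding h_def using B
    by (intro linearI) (simp_all add: bilinear_radd bilinear_rmul)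
  have "h ` W = UNIV"
  proof (rule ccontr)
    assume "h ` W \<noteq> UNIV"
    moreover have "span (h ` W) = h ` W" using W lh by (simp add: linear_subspace_image)
    ultimately have "dim (h ` W) < DIM(real \<times> real)"
      using dim_subset_UNIV[of "h ` W"] dim_eq_full[of "h ` W"] by (metis order_less_le)
    then obtain z where z: "z \<noteq> 0" "\<And>v. v \<in> span (h ` W) \<Longrightarrow> orthogonal z v"
      using orthogonal_to_subspace_exists by blast
    obtain g d where gd: "z = (g, d)" by (cases z)
    have "B (g *\<^sub>R x + d *\<^sub>R y) u = 0" if "u \<in> W" for u
      using z(2)[OF span_base[OF imageI[OF that]]] gd B
      by (simp add: h_def orthogonal_def bilinear_ladd bilinear_lmul)
    then have "g *\<^sub>R x + d *\<^sub>R y = 0"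
      using nd W xy unfolding nondegenerate_on_def by (meson subspace_add subspace_scale)
    then show False using indep z(1) gd by (simp add: zero_prod_def)
  qed
  then obtain e where "e \<in> W" "h e = (1, 0)" by (metis UNIV_I imageE)
  then show ?thesis by (auto simp: h_def)
qed

locale regular_pencil =
  fixes W :: "'a::euclidean_space set" and B\<^sub>1 B\<^sub>2 :: "'a \<Rightarrow> 'a \<Rightarrow> real"
  assumes subspace_W: "subspace W"
    and bilinear_B: "bilinear B\<^sub>1" "bilinear B\<^sub>2"
    and alternating_B: "alternating B\<^sub>1" "alternating B\<^sub>2"
    and nondegenerate_pencil:
      "a \<noteq> 0 \<or> b \<noteq> 0 \<Longrightarrow> nondegenerate_on (\<lambda>v w. a * B\<^sub>1 v w + b * B\<^sub>2 v w) W"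
begin

lemmas bilinear_simps =
  bilinear_ladd[OF bilinear_B(1)] bilinear_radd[OF bilinear_B(1)]
  bilinear_lmul[OF bilinear_B(1)] bilinear_rmul[OF bilinear_B(1)]
  bilinear_lsub[OF bilinear_B(1)] bilinear_rsub[OF bilinear_B(1)]
  bilinear_lneg[OF bilinear_B(1)] bilinear_rneg[OF bilinear_B(1)]
  bilinear_ladd[OF bilinear_B(2)] bilinear_radd[OF bilinear_B(2)]
  bilinear_lmul[OF bilinear_B(2)] bilinear_rmul[OF bilinear_B(2)]
  bilinear_lsub[OF bilinear_B(2)] bilinear_rsub[OF bilinear_B(2)]
  bilinear_lneg[OF bilinear_B(2)] bilinear_rneg[OF bilinear_B(2)]

lemma alternating_simps [simp]: "B\<^sub>1 v v = 0" "B\<^sub>2 v v = 0"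
  using alternating_B by (simp_all add: alternating_def)

lemma antisym_B: "B\<^sub>1 v w = - B\<^sub>1 w v" "B\<^sub>2 v w = - B\<^sub>2 w v"
  using alternating_antisym bilinear_B alternating_B by blast+

lemma pencil_vanishing_imp_zero:
  assumes "a \<noteq> 0 \<or> b \<noteq> 0" and "v \<in> W" and "\<And>u. u \<in> W \<Longrightarrow> a * B\<^sub>1 v u + b * B\<^sub>2 v u = 0"
  shows "v = 0"
  using nondegenerate_pencil[OF assms(1)] assms(2,3) by (simp add: nondegenerate_on_def)

lemma nondegenerate_B1: "nondegenerate_on B\<^sub>1 W"
  using nondegenerate_pencil[of 1 0] by simp

text \<open>An eigenvector for \<open>c\<close> lies in the kernel of \<open>B\<^sub>2 - c B\<^sub>1\<close>.\<close>
lemma intertwining_no_eigenvector: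
  assumes T: "\<And>v u. v \<in> W \<Longrightarrow> u \<in> W \<Longrightarrow> B\<^sub>1 (T v) u = B\<^sub>2 v u"
    and v: "v \<in> W" "T v = c *\<^sub>R v"
  shows "v = 0"
proof (rule pencil_vanishing_imp_zero[of "- c" 1])
  fix u assume "u \<in> W"
  then show "- c * B\<^sub>1 v u + 1 * B\<^sub>2 v u = 0" using T[OF v(1)] v(2) by (simp add: bilinear_simps)
qed (use v in auto)

end

text \<open>The plane spanned by \<open>x\<close> and \<open>y\<close> is invariant under \<open>B\<^sub>1\<^sup>-\<^sup>1 B\<^sub>2\<close>, which maps \<open>x\<close> to \<open>y\<close> and
  \<open>y\<close> to \<open>p y + q x\<close>.\<close>
locale regular_pencil_plane = regular_pencil +
  fixes x y :: "'a::euclidean_space" and p q :: real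
  assumes plane_in_W: "x \<in> W" "y \<in> W" and x_nonzero: "x \<noteq> 0"
    and B\<^sub>2_x: "\<And>u. u \<in> W \<Longrightarrow> B\<^sub>2 x u = B\<^sub>1 y u"
    and B\<^sub>2_y: "\<And>u. u \<in> W \<Longrightarrow> B\<^sub>2 y u = p * B\<^sub>1 y u + q * B\<^sub>1 x u"
begin

lemma pencil_on_plane:
  assumes "w \<in> W"
  shows "a * B\<^sub>1 (g *\<^sub>R x + d *\<^sub>R y) w + b * B\<^sub>2 (g *\<^sub>R x + d *\<^sub>R y) w
    = (a * g + b * q * d) * B\<^sub>1 x w + (b * g + (a + b * p) * d) * B\<^sub>1 y w"
  using assms by (simp add: bilinear_simps B\<^sub>2_x B\<^sub>2_y algebra_simps)

lemma plane_isotropic: "B\<^sub>1 x y = 0" "B\<^sub>1 y x = 0"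
  using B\<^sub>2_x[OF plane_in_W(1)] antisym_B(1)[of x y] by simp_all

lemma plane_independent:
  assumes "g *\<^sub>R x + d *\<^sub>R y = 0"
  shows "g = 0 \<and> d = 0"
proof (cases "d = 0")
  case True
  then show ?thesis using assms x_nonzero by simp
next
  case False
  have "d *\<^sub>R y = - (g *\<^sub>R x)" using assms by (simp add: eq_neg_iff_add_eq_0 add.commute)
  then have "y = (- g / d) *\<^sub>R x"
    using False by (metis scaleR_minus_left scaleR_scaleR divide_inverse_commute
        eq_vector_fraction_iff)
  then have "x = 0"
    using pencil_vanishing_imp_zero[of "g / d" 1 x] plane_in_W(1)
    by (simp add: B\<^sub>2_x bilinear_simps)
  then show ?thesis using x_nonzero by simp
qed

text \<open>Restricted to the plane, the form \<open>a B\<^sub>1 + b B\<^sub>2\<close> acts on the coefficients of \<open>x, y\<close> by an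
  invertible \<open>2 \<times> 2\<close> matrix: it is injective by nondegeneracy, hence onto.\<close>
lemma pencil_plane_onto:
  assumes ab: "a \<noteq> 0 \<or> b \<noteq> 0"
  obtains g d where "\<And>w. w \<in> W \<Longrightarrow> a * B\<^sub>1 (g *\<^sub>R x + d *\<^sub>R y) w + b * B\<^sub>2 (g *\<^sub>R x + d *\<^sub>R y) w
    = \<alpha> * B\<^sub>1 x w + \<beta> * B\<^sub>1 y w"
proof -
  define M where "M = (\<lambda>(g, d). (a * g + b * q * d, b * g + (a + b * p) * d))"
  have "linear M"
    unfolding M_def by (intro linearI) (auto simp: algebra_simps)
  moreover have "inj M"
    unfolding linear_injective_0[OF \<open>linear M\<close>]
  proof (intro allI impI)
    fix gd assume M0: "M gd = 0"
    obtain g d where gd: "gd = (g, d)" by (cases gd)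
    have "g *\<^sub>R x + d *\<^sub>R y = 0"
    proof (rule pencil_vanishing_imp_zero[OF ab])
      show "g *\<^sub>R x + d *\<^sub>R y \<in> W"
        using subspace_W plane_in_W by (intro subspace_add subspace_scale)
      fix u assume "u \<in> W"
      then show "a * B\<^sub>1 (g *\<^sub>R x + d *\<^sub>R y) u + b * B\<^sub>2 (g *\<^sub>R x + d *\<^sub>R y) u = 0"
        using pencil_on_plane M0 gd by (simp add: M_def zero_prod_def)
    qed
    then show "gd = 0" using plane_independent gd by (simp add: zero_prod_def)
  qed
  ultimately obtain g d where "M (g, d) = (\<alpha>, \<beta>)"
    using linear_injective_imp_surjective by (metis surj_def prod.collapse)
  then show ?thesis by (intro that[of g d]) (simp add: pencil_on_plane M_def)
qed

lemma exists_dual_pair: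
  obtains e f where "e \<in> W" "f \<in> W" "B\<^sub>1 x e = 1" "B\<^sub>1 y e = 0" "B\<^sub>1 x f = 0" "B\<^sub>1 y f = 1"
proof -
  obtain e where "e \<in> W" "B\<^sub>1 x e = 1" "B\<^sub>1 y e = 0"
    using nondegenerate_on_dual_vector[OF bilinear_B(1) nondegenerate_B1 subspace_W plane_in_W]
      plane_independent by blast
  moreover obtain f where "f \<in> W" "B\<^sub>1 y f = 1" "B\<^sub>1 x f = 0"
    using nondegenerate_on_dual_vector[OF bilinear_B(1) nondegenerate_B1 subspace_W
        plane_in_W(2,1)] plane_independent by (metis add.commute)
  ultimately show ?thesis using that by blast
qed

end

locale regular_pencil_split = regular_pencil_plane +
  fixes e f :: "'a::euclidean_space"
  assumes dual_in_W: "e \<in> W" "f \<in> W"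
    and dual: "B\<^sub>1 x e = 1" "B\<^sub>1 y e = 0" "B\<^sub>1 x f = 0" "B\<^sub>1 y f = 1"
begin

definition dual_coords :: "'a \<Rightarrow> real \<times> real \<times> real \<times> real" where
  "dual_coords w = (B\<^sub>1 x w, B\<^sub>1 y w, B\<^sub>1 e w, B\<^sub>1 f w)"

definition complement :: "'a set" where
  "complement = W \<inter> {w. dual_coords w = 0}"

lemma linear_dual_coords: "linear dual_coords"
  unfolding dual_coords_def by (intro linearI) (simp_all add: bilinear_simps)

lemma mem_complement:
  "w \<in> complement \<longleftrightarrow> w \<in> W \<and> B\<^sub>1 x w = 0 \<and> B\<^sub>1 y w = 0 \<and> B\<^sub>1 e w = 0 \<and> B\<^sub>1 f w = 0"
  by (simp add: complement_def dual_coords_def zero_prod_def)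

lemma subspace_complement: "subspace complement"
  unfolding complement_def
  using subspace_W linear_dual_coords by (simp add: subspace_inter linear_subspace_kernel)

lemma dual_rev: "B\<^sub>1 e x = -1" "B\<^sub>1 e y = 0" "B\<^sub>1 f x = 0" "B\<^sub>1 f y = -1"
  using antisym_B(1)[of e x] antisym_B(1)[of e y] antisym_B(1)[of f x] antisym_B(1)[of f y] dual
  by simp_all

lemma complement_decomposition:
  assumes "w \<in> W"
  obtains c \<gamma> \<delta> where "c \<in> complement"
    and "w = c + B\<^sub>1 x w *\<^sub>R e + B\<^sub>1 y w *\<^sub>R f + \<gamma> *\<^sub>R x + \<delta> *\<^sub>R y"
proof -
  define \<gamma> where "\<gamma> = B\<^sub>1 y w * B\<^sub>1 e f - B\<^sub>1 e w"
  define \<delta> where "\<delta> = B\<^sub>1 x w * B\<^sub>1 f e - B\<^sub>1 f w"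
  define c where "c = w - B\<^sub>1 x w *\<^sub>R e - B\<^sub>1 y w *\<^sub>R f - \<gamma> *\<^sub>R x - \<delta> *\<^sub>R y"
  have "c \<in> W"
    unfolding c_def using assms subspace_W dual_in_W plane_in_W
    by (intro subspace_diff subspace_scale)
  then have "c \<in> complement"
    by (simp add: mem_complement c_def \<gamma>_def \<delta>_def bilinear_simps dual dual_rev plane_isotropic)
  then show ?thesis using that[of c \<gamma> \<delta>] by (simp add: c_def)
qed

lemma dim_complement: "dim complement + 4 = dim W"
proof -
  have "(a, b, c, d) \<in> dual_coords ` W" for a b c d
  proof
    let ?v = "a *\<^sub>R e + b *\<^sub>R f + (b * B\<^sub>1 e f - c) *\<^sub>R x + (a * B\<^sub>1 f e - d) *\<^sub>R y"
    show "?v \<in> W" using subspace_W dual_in_W plane_in_W by (intro subspace_add subspace_scale)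
    show "(a, b, c, d) = dual_coords ?v"
      by (simp add: dual_coords_def bilinear_simps dual dual_rev plane_isotropic)
  qed
  then have "dual_coords ` W = UNIV" by auto
  then show ?thesis
    using dim_kernel_plus_dim_image[OF linear_dual_coords subspace_W]
    by (simp add: complement_def)
qed

lemma pencil_complement_plane:
  assumes "u \<in> complement"
  shows "a * B\<^sub>1 u x + b * B\<^sub>2 u x = 0" and "a * B\<^sub>1 u y + b * B\<^sub>2 u y = 0"
proof -
  have "u \<in> W" "B\<^sub>1 x u = 0" "B\<^sub>1 y u = 0" using assms by (auto simp: mem_complement)
  then show "a * B\<^sub>1 u x + b * B\<^sub>2 u x = 0" "a * B\<^sub>1 u y + b * B\<^sub>2 u y = 0"
    using antisym_B(1)[of u x] antisym_B(2)[of u x] antisym_B(1)[of u y] antisym_B(2)[of u y]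
    by (simp_all add: B\<^sub>2_x B\<^sub>2_y)
qed

text \<open>On \<open>W\<close>, the form \<open>a B\<^sub>1 + b B\<^sub>2\<close> paired with \<open>u \<in> complement\<close> only sees the coordinates
  \<open>B\<^sub>1 x\<close> and \<open>B\<^sub>1 y\<close>; by \<open>pencil_plane_onto\<close> it thus agrees with the pairing of some \<open>s\<close> in the
  plane, and nondegeneracy on \<open>W\<close> forces \<open>u = s\<close>, which lies in \<open>complement\<close> only if it is \<open>0\<close>.\<close>
lemma complement_nondegenerate:
  assumes ab: "a \<noteq> 0 \<or> b \<noteq> 0"
  shows "nondegenerate_on (\<lambda>v w. a * B\<^sub>1 v w + b * B\<^sub>2 v w) complement"
  unfolding nondegenerate_on_def
proof (intro ballI impI)
  define \<omega> where "\<omega> v w = a * B\<^sub>1 v w + b * B\<^sub>2 v w" for v w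
  fix u assume u: "u \<in> complement" and H: "\<forall>w\<in>complement. a * B\<^sub>1 u w + b * B\<^sub>2 u w = 0"
  have uW: "u \<in> W" and u_perp: "B\<^sub>1 e u = 0" "B\<^sub>1 f u = 0"
    using u by (auto simp: mem_complement)
  have \<omega>_u: "\<omega> u w = \<omega> u e * B\<^sub>1 x w + \<omega> u f * B\<^sub>1 y w" if wW: "w \<in> W" for w
  proof -
    obtain c \<gamma> \<delta> where c: "c \<in> complement"
      and w: "w = c + B\<^sub>1 x w *\<^sub>R e + B\<^sub>1 y w *\<^sub>R f + \<gamma> *\<^sub>R x + \<delta> *\<^sub>R y"
      using complement_decomposition[OF wW] by blast
    have "\<omega> u w = \<omega> u c + B\<^sub>1 x w * \<omega> u e + B\<^sub>1 y w * \<omega> u f + \<gamma> * \<omega> u x + \<delta> * \<omega> u y"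
      using arg_cong[where f="\<omega> u", OF w] by (simp add: \<omega>_def bilinear_simps algebra_simps)
    moreover have "\<omega> u c = 0" using H c by (simp add: \<omega>_def)
    ultimately show ?thesis
      using pencil_complement_plane[OF u] by (simp add: \<omega>_def mult.commute)
  qed
  obtain g d where gd: "\<And>w. w \<in> W \<Longrightarrow> \<omega> (g *\<^sub>R x + d *\<^sub>R y) w = \<omega> u e * B\<^sub>1 x w + \<omega> u f * B\<^sub>1 y w"
    using pencil_plane_onto[OF ab] unfolding \<omega>_def by blast
  have "u - (g *\<^sub>R x + d *\<^sub>R y) = 0"
  proof (rule pencil_vanishing_imp_zero[OF ab])
    show "u - (g *\<^sub>R x + d *\<^sub>R y) \<in> W"
      using uW subspace_W plane_in_W by (intro subspace_diff subspace_add subspace_scale)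
    fix w assume "w \<in> W"
    then have "\<omega> u w = \<omega> (g *\<^sub>R x + d *\<^sub>R y) w" using \<omega>_u gd by simp
    then show "a * B\<^sub>1 (u - (g *\<^sub>R x + d *\<^sub>R y)) w + b * B\<^sub>2 (u - (g *\<^sub>R x + d *\<^sub>R y)) w = 0"
      by (simp add: \<omega>_def bilinear_simps algebra_simps)
  qed
  then have u_plane: "u = g *\<^sub>R x + d *\<^sub>R y" by simp
  have "g = 0" "d = 0"
    using u_perp by (simp_all add: u_plane bilinear_simps dual_rev plane_isotropic)
  then show "u = 0" using u_plane by simp
qed

lemma regular_pencil_complement: "regular_pencil complement B\<^sub>1 B\<^sub>2"
  using subspace_complement bilinear_B alternating_B complement_nondegenerate
  by (simp add: regular_pencil_def)

end


lemma (in regular_pencil) exists_regular_pencil_codim4: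
  assumes "W \<noteq> {0}"
  obtains C where "regular_pencil C B\<^sub>1 B\<^sub>2" and "dim C + 4 = dim W"
proof -
  obtain T where T: "linear T" and TW: "\<And>v. v \<in> W \<Longrightarrow> T v \<in> W"
    and B\<^sub>1_T: "\<And>v u. v \<in> W \<Longrightarrow> u \<in> W \<Longrightarrow> B\<^sub>1 (T v) u = B\<^sub>2 v u"
    using exists_operator_intertwining[OF subspace_W bilinear_B nondegenerate_B1] by blast
  have "\<exists>x\<in>W. x \<noteq> 0 \<and> (\<exists>p q. T (T x) = p *\<^sub>R T x + q *\<^sub>R x)"
    by (rule exists_invariant_plane[OF T subspace_W])
      (use TW intertwining_no_eigenvector[OF B\<^sub>1_T] assms in auto)
  then obtain x p q where x: "x \<in> W" "x \<noteq> 0" and Tx: "T (T x) = p *\<^sub>R T x + q *\<^sub>R x"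
    by blast
  have "B\<^sub>2 (T x) u = p * B\<^sub>1 (T x) u + q * B\<^sub>1 x u" if "u \<in> W" for u
    using B\<^sub>1_T[OF TW[OF x(1)] that] Tx by (simp add: bilinear_simps)
  then interpret plane: regular_pencil_plane W B\<^sub>1 B\<^sub>2 x "T x" p q
    by unfold_locales (use x TW B\<^sub>1_T in auto)
  obtain e f where "e \<in> W" "f \<in> W" "B\<^sub>1 x e = 1" "B\<^sub>1 (T x) e = 0" "B\<^sub>1 x f = 0" "B\<^sub>1 (T x) f = 1"
    by (rule plane.exists_dual_pair)
  then interpret split: regular_pencil_split W B\<^sub>1 B\<^sub>2 x "T x" p q e f
    by unfold_locales
  show ?thesis using that split.regular_pencil_complement split.dim_complement .
qed

lemma regular_pencil_dim_dvd4:
  "regular_pencil W B\<^sub>1 B\<^sub>2 \<Longrightarrow> 4 dvd dim W"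
proof (induction "dim W" arbitrary: W rule: less_induct)
  case less
  show ?case
  proof (cases "W = {0}")
    case False
    then obtain C where "regular_pencil C B\<^sub>1 B\<^sub>2" "dim C + 4 = dim W"
      using regular_pencil.exists_regular_pencil_codim4[OF less.prems] by blast
    moreover from this have "4 dvd dim C" using less.hyps[of C] by simp
    ultimately show ?thesis by (metis dvd_add dvd_refl)
  qed simp
qed

section \<open>MD-algebras with central two-dimensional derived algebra\<close>

lemma lie_algebra_bilinear: "lie_algebra br \<Longrightarrow> bilinear br"
  by (simp add: lie_algebra_def bilinear_def)

lemma lie_algebra_alternating: "lie_algebra br \<Longrightarrow> alternating br"
  by (simp add: lie_algebra_def alternating_def)

lemma bilinear_inner_left_comp:
  assumes "bilinear B"
  shows "bilinear (\<lambda>x y. c \<bullet> B x y)"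
  unfolding bilinear_def
  by (intro conjI allI linearI)
    (simp_all add: bilinear_ladd[OF assms] bilinear_radd[OF assms] bilinear_lmul[OF assms]
      bilinear_rmul[OF assms] inner_add_right)

lemma linear_cart_expansion:
  fixes g :: "real^'n \<Rightarrow> real"
  assumes "linear g"
  shows "g x = (\<Sum>i\<in>UNIV. x $ i * g (axis i 1))"
proof -
  have "g x = g (\<Sum>i\<in>UNIV. x $ i *\<^sub>R axis i 1)"
    using basis_expansion[of x] by (simp add: scalar_mult_eq_scaleR)
  also have "\<dots> = (\<Sum>i\<in>UNIV. x $ i * g (axis i 1))"
    using linear_sum[OF assms, of "\<lambda>i. x $ i *\<^sub>R axis i 1" UNIV] linear_scale[OF assms] by simp
  finally show ?thesis .
qed

lemma coadj_orbit_dim_radical: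
  fixes br :: "real^'n \<Rightarrow> real^'n \<Rightarrow> real^'n"
  assumes br: "bilinear br" and F: "linear F"
  shows "dim {y. \<forall>x. F (br x y) = 0} + coadj_orbit_dim br F = CARD('n)"
proof -
  define M where "M = (\<chi> i j. F (br (axis i 1) (axis j 1)) :: real^'n^'n)"
  have lin: "linear (\<lambda>x. F (br x y))" "linear (\<lambda>y. F (br x y))" for x y
    using linear_compose[of "\<lambda>x. br x y" F] linear_compose[of "br x" F] br F
    by (simp_all add: bilinear_def o_def)
  have Mv: "(M *v y) $ i = F (br (axis i 1) y)" for y i
    using linear_cart_expansion[OF lin(2), of "axis i 1" y]
    by (simp add: matrix_vector_mult_def M_def mult.commute)
  have "M *v y = 0 \<longleftrightarrow> (\<forall>x. F (br x y) = 0)" for y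
  proof
    assume "M *v y = 0"
    then have zero: "F (br (axis i 1) y) = 0" for i using Mv[of y i] by simp
    show "\<forall>x. F (br x y) = 0"
    proof
      fix x
      show "F (br x y) = 0" using linear_cart_expansion[OF lin(1)[of y], of x] by (simp add: zero)
    qed
  qed (simp add: vec_eq_iff Mv)
  then have "{y. M *v y = 0} = {y. \<forall>x. F (br x y) = 0}" by simp
  moreover have "dim (UNIV \<inter> {y. M *v y = 0}) + dim (range ((*v) M)) = dim (UNIV :: (real^'n) set)"
    by (rule dim_kernel_plus_dim_image) (simp_all add: matrix_vector_mul_linear)
  ultimately show ?thesis
    by (simp add: coadj_orbit_dim_def M_def[symmetric] rank_dim_range)
qed

lemma nondegenerate_on_orthogonal_complement_of_radical:
  fixes B :: "'a::euclidean_space \<Rightarrow> 'a \<Rightarrow> real"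
  assumes B: "bilinear B" "alternating B" and Z: "subspace Z"
    and radical: "{y. \<forall>x. B x y = 0} = Z"
  shows "nondegenerate_on B {y. \<forall>z\<in>Z. orthogonal z y}"
  unfolding nondegenerate_on_def
proof (intro ballI impI)
  fix u assume u: "u \<in> {y. \<forall>z\<in>Z. orthogonal z y}" and H: "\<forall>w\<in>{y. \<forall>z\<in>Z. orthogonal z y}. B u w = 0"
  have Bu: "B u v = 0" for v
  proof -
    obtain z w where zw: "z \<in> span Z" "\<And>t. t \<in> span Z \<Longrightarrow> orthogonal w t" "v = z + w"
      using orthogonal_subspace_decomp_exists[of Z v] by metis
    have "z \<in> Z" using zw(1) span_eq_iff[THEN iffD2, OF Z] by simp
    then have "B u z = 0" using radical by blast
    moreover have "B u w = 0" using H zw(2) span_base orthogonal_commute by blast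
    ultimately show ?thesis using zw(3) B(1) by (simp add: bilinear_radd)
  qed
  have "B x u = 0" for x using alternating_antisym[OF B, of x u] Bu by simp
  then have "u \<in> Z" using radical by blast
  then show "u = 0" using u by (auto simp: orthogonal_def)
qed

lemma MD_central_radical:
  fixes br :: "real^'n \<Rightarrow> real^'n \<Rightarrow> real^'n"
  assumes MD: "MD_algebra (CARD('n) - 2) br" and dim2: "dim (derived_algebra br) = 2"
    and central: "derived_algebra br \<subseteq> lie_centre br"
    and c: "c \<in> derived_algebra br" "c \<noteq> 0"
  shows "{y. \<forall>x. c \<bullet> br x y = 0} = derived_algebra br"
proof -
  let ?Z = "derived_algebra br" and ?R = "{y. \<forall>x. c \<bullet> br x y = 0}"
  have br: "bilinear br" "alternating br"
    using MD by (simp_all add: MD_algebra_def solvable_lie_def lie_algebra_bilinear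
        lie_algebra_alternating)
  have lc: "linear ((\<bullet>) c)" by (simp add: linear_iff inner_add_right)
  have "\<exists>x\<in>?Z. c \<bullet> x \<noteq> 0" using c by (intro bexI[of _ c]) simp_all
  then have "coadj_orbit_dim br ((\<bullet>) c) = CARD('n) - 2"
    using MD lc unfolding MD_algebra_def by blast
  moreover have "2 \<le> CARD('n)"
    using dim2 dim_subset_UNIV[of ?Z] by simp
  ultimately have dimR: "dim ?R = dim ?Z"
    using coadj_orbit_dim_radical[OF br(1) lc] dim2 by simp
  have sZ: "subspace ?Z" by (simp add: derived_algebra_def bracket_span_def)
  have sR: "subspace ?R"
    using br(1) by (auto simp: subspace_def bilinear_radd bilinear_rmul bilinear_rzero inner_add_right)
  have "?Z \<subseteq> ?R"
  proof
    fix z assume "z \<in> ?Z"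
    then have "br z x = 0" for x using central by (auto simp: lie_centre_def)
    then show "z \<in> ?R" using alternating_antisym[OF br, of _ z] by simp
  qed
  then show ?thesis using subspace_dim_equal[OF sZ sR] dimR by auto
qed

lemma MD_central_derived_regular_pencil:
  fixes br :: "real^'n \<Rightarrow> real^'n \<Rightarrow> real^'n"
  assumes MD: "MD_algebra (CARD('n) - 2) br" and dim2: "dim (derived_algebra br) = 2"
    and central: "derived_algebra br \<subseteq> lie_centre br"
  obtains W :: "(real^'n) set" and B\<^sub>1 B\<^sub>2 :: "real^'n \<Rightarrow> real^'n \<Rightarrow> real"
  where "regular_pencil W B\<^sub>1 B\<^sub>2" and "dim W + 2 = CARD('n)"
proof -
  let ?Z = "derived_algebra br"
  define W where "W = {y. \<forall>z\<in>?Z. orthogonal z y}"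
  have br: "bilinear br" "alternating br"
    using MD by (simp_all add: MD_algebra_def solvable_lie_def lie_algebra_bilinear
        lie_algebra_alternating)
  have sZ: "subspace ?Z" by (simp add: derived_algebra_def bracket_span_def)
  obtain Bs where Bs: "Bs \<subseteq> ?Z" "independent Bs" "?Z \<subseteq> span Bs" "card Bs = dim ?Z"
    by (rule basis_exists)
  then obtain z\<^sub>1 z\<^sub>2 where z: "Bs = {z\<^sub>1, z\<^sub>2}" "z\<^sub>1 \<noteq> z\<^sub>2" using dim2 by (metis card_2_iff)
  have comb: "a *\<^sub>R z\<^sub>1 + b *\<^sub>R z\<^sub>2 \<in> ?Z - {0}" if "a \<noteq> 0 \<or> b \<noteq> 0" for a b
  proof -
    have "a *\<^sub>R z\<^sub>1 + b *\<^sub>R z\<^sub>2 \<in> ?Z" using Bs(1) z sZ by (intro subspace_add subspace_scale) auto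
    moreover have "a *\<^sub>R z\<^sub>1 + b *\<^sub>R z\<^sub>2 \<noteq> 0"
    proof
      assume "a *\<^sub>R z\<^sub>1 + b *\<^sub>R z\<^sub>2 = 0"
      moreover have "(\<Sum>v\<in>Bs. (if v = z\<^sub>1 then a else b) *\<^sub>R v) = a *\<^sub>R z\<^sub>1 + b *\<^sub>R z\<^sub>2"
        using z by simp
      ultimately have sum0: "(\<Sum>v\<in>Bs. (if v = z\<^sub>1 then a else b) *\<^sub>R v) = 0" by simp
      have indep: "\<And>c. (\<Sum>v\<in>Bs. c v *\<^sub>R v) = 0 \<Longrightarrow> \<forall>v\<in>Bs. c v = 0"
        using Bs(2) by (simp add: independent_explicit)
      from sum0 have "\<forall>v\<in>Bs. (if v = z\<^sub>1 then a else b) = 0" by (rule indep)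
      then show False using z that by auto
    qed
    ultimately show ?thesis by simp
  qed
  have "regular_pencil W (\<lambda>x y. z\<^sub>1 \<bullet> br x y) (\<lambda>x y. z\<^sub>2 \<bullet> br x y)"
  proof (rule regular_pencil.intro)
    show "subspace W" unfolding W_def by (auto simp: subspace_def orthogonal_clauses)
    show "bilinear (\<lambda>x y. z\<^sub>1 \<bullet> br x y)" "bilinear (\<lambda>x y. z\<^sub>2 \<bullet> br x y)"
      using bilinear_inner_left_comp[OF br(1)] by blast+
    show "alternating (\<lambda>x y. z\<^sub>1 \<bullet> br x y)" "alternating (\<lambda>x y. z\<^sub>2 \<bullet> br x y)"
      using br(2) by (simp_all add: alternating_def)
    fix a b :: real assume "a \<noteq> 0 \<or> b \<noteq> 0"
    then have c: "a *\<^sub>R z\<^sub>1 + b *\<^sub>R z\<^sub>2 \<in> ?Z" "a *\<^sub>R z\<^sub>1 + b *\<^sub>R z\<^sub>2 \<noteq> 0" using comb by auto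
    have "nondegenerate_on (\<lambda>x y. (a *\<^sub>R z\<^sub>1 + b *\<^sub>R z\<^sub>2) \<bullet> br x y) W"
      unfolding W_def
      using nondegenerate_on_orthogonal_complement_of_radical[OF
          bilinear_inner_left_comp[OF br(1)] _ sZ MD_central_radical[OF MD dim2 central c]] br(2)
      by (simp add: alternating_def)
    then show "nondegenerate_on (\<lambda>x y. a * (z\<^sub>1 \<bullet> br x y) + b * (z\<^sub>2 \<bullet> br x y)) W"
      by (simp add: inner_add_left)
  qed
  moreover have "dim W + 2 = CARD('n)"
    using dim_subspace_orthogonal_to_vectors[OF sZ subspace_UNIV] dim2 by (simp add: W_def)
  ultimately show ?thesis by (rule that)
qed

theorem corollary4p6:
  fixes br :: "real^'n \<Rightarrow> real^'n \<Rightarrow> real^'n"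
  assumes "MD_algebra (CARD('n) - 2) br"
    and "dim (derived_algebra br) = 2"
    and "derived_algebra br \<subseteq> lie_centre br"
  shows "4 dvd (CARD('n) - 2)"
proof -
  obtain W :: "(real^'n) set" and B\<^sub>1 B\<^sub>2
    where "regular_pencil W B\<^sub>1 B\<^sub>2" and dimW: "dim W + 2 = CARD('n)"
    by (rule MD_central_derived_regular_pencil[OF assms])
  then have "4 dvd dim W" by (intro regular_pencil_dim_dvd4)
  moreover have "CARD('n) - 2 = dim W" using dimW by simp
  ultimately show ?thesis by simp
qed

end
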